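(* Let $S=\langle T,\Pi,C\rangle$ be a state space and let $(A_i,\psi_i)$, $1\le i\le k$, be abstractions of $S$ forming an additive abstraction system. Let $t,g\in T$ and let $\pi$ be a path from $t$ to $g$ in $S$ with $C(\pi)=\sum_{i=1}^k C^*_i(t_i,g_i)$. Then $\sum_{i=1}^k C^*_i(t_i,g_i)\ge C^*_j(t_j,g_j)+R^*_j(t_j,g_j)$ for all $j\in\{1,\dots,k\}$.
   Context: A state space is a weighted directed graph $S=\langle T,\Pi,C\rangle$ where $T$ is a finite set of states, $\Pi\subseteq T\times T$ is a set of directed edges, and $C:\Pi\to\mathbb{N}=\{0,1,2,\dots\}$. A path from $u$ to $v$ is a sequence of edges $\langle\pi^1,\dots,\pi^n\rangle$ with $\pi^j=(u^{j-1},u^j)\in\Pi$, $u^0=u$, $u^n=v$; its cost is $C(\pi)=\sum_j C(\pi^j)$. An abstract state space is $A_i=\langle T_i,\Pi_i,C_i,R_i\rangle$ with $T_i$ a set of abstract states, $\Pi_i\subseteq T_i\times T_i$, and edge weights $C_i,R_i:\Pi_i\to\mathbb{N}$ (primary and residual cost), extended additively to paths. An abstraction of $S$ is a pair $(A_i,\psi_i)$ with $\psi_i:T\to T_i$ such that (1) for every $(u,v)\in\Pi$, $(\psi_i(u),\psi_i(v))\in\Pi_i$, and (2) for every $\pi=(u,v)\in\Pi$, $C_i(\pi_i)+R_i(\pi_i)\le C(\pi)$ where $\pi_i=(\psi_i(u),\psi_i(v))$. The system is additive if for every $\pi\in\Pi$, $\sum_{i=1}^k C_i(\pi_i)\le C(\pi)$.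 Write $t_i=\psi_i(t)$. Define $C^*_i(x,y)=\min\{C_i(\rho):\rho\text{ a path from }x\text{ to }y\text{ in }A_i\}$; $P_i(x,y)$ is the set of paths $\rho$ from $x$ to $y$ in $A_i$ with $C_i(\rho)=C^*_i(x,y)$, and $R^*_i(x,y)=\min_{\rho\in P_i(x,y)}R_i(\rho)$. *)

theory Defs
  imports Main
begin

fun is_path :: "('a \<times> 'a) set \<Rightarrow> 'a \<Rightarrow> ('a \<times> 'a) list \<Rightarrow> 'a \<Rightarrow> bool" where
  "is_path E u [] v = (u = v)"
| "is_path E u (e # es) v = (fst e = u \<and> e \<in> E \<and> is_path E (snd e) es v)"

definition path_cost :: "('a \<times> 'a \<Rightarrow> nat) \<Rightarrow> ('a \<times> 'a) list \<Rightarrow> nat" where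
  "path_cost c es = sum_list (map c es)"

definition state_space :: "'s set \<Rightarrow> ('s \<times> 's) set \<Rightarrow> bool" where
  "state_space T Pi \<longleftrightarrow> finite T \<and> Pi \<subseteq> T \<times> T"

definition abstract_state_space :: "'a set \<Rightarrow> ('a \<times> 'a) set \<Rightarrow> bool" where
  "abstract_state_space Ta Pia \<longleftrightarrow> Pia \<subseteq> Ta \<times> Ta"

definition is_abstraction ::
  "'s set \<Rightarrow> ('s \<times> 's) set \<Rightarrow> ('s \<times> 's \<Rightarrow> nat) \<Rightarrow>
   'a set \<Rightarrow> ('a \<times> 'a) set \<Rightarrow> ('a \<times> 'a \<Rightarrow> nat) \<Rightarrow> ('a \<times> 'a \<Rightarrow> nat) \<Rightarrow> ('s \<Rightarrow> 'a) \<Rightarrow> bool" where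
  "is_abstraction T Pi C Ta Pia Ca Ra psi \<longleftrightarrow>
     abstract_state_space Ta Pia \<and> psi ` T \<subseteq> Ta \<and>
     (\<forall>(u, v) \<in> Pi. (psi u, psi v) \<in> Pia \<and> Ca (psi u, psi v) + Ra (psi u, psi v) \<le> C (u, v))"

definition additive ::
  "('s \<times> 's) set \<Rightarrow> ('s \<times> 's \<Rightarrow> nat) \<Rightarrow> nat \<Rightarrow> (nat \<Rightarrow> 'a \<times> 'a \<Rightarrow> nat) \<Rightarrow> (nat \<Rightarrow> 's \<Rightarrow> 'a) \<Rightarrow> bool" where
  "additive Pi C k Ca psi \<longleftrightarrow>
     (\<forall>(u, v) \<in> Pi. (\<Sum>i = 1..k. Ca i (psi i u, psi i v)) \<le> C (u, v))"

definition opt_cost :: "('a \<times> 'a) set \<Rightarrow> ('a \<times> 'a \<Rightarrow> nat) \<Rightarrow> 'a \<Rightarrow> 'a \<Rightarrow> nat" where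
  "opt_cost E c x y = Inf {path_cost c p | p. is_path E x p y}"

definition opt_paths :: "('a \<times> 'a) set \<Rightarrow> ('a \<times> 'a \<Rightarrow> nat) \<Rightarrow> 'a \<Rightarrow> 'a \<Rightarrow> ('a \<times> 'a) list set" where
  "opt_paths E c x y = {p. is_path E x p y \<and> path_cost c p = opt_cost E c x y}"

definition opt_residual ::
  "('a \<times> 'a) set \<Rightarrow> ('a \<times> 'a \<Rightarrow> nat) \<Rightarrow> ('a \<times> 'a \<Rightarrow> nat) \<Rightarrow> 'a \<Rightarrow> 'a \<Rightarrow> nat" where
  "opt_residual E c r x y = Inf (path_cost r ` opt_paths E c x y)"

end

theory Submission
  imports Defs
begin

text \<open>The images of a concrete path under the abstraction maps are abstract paths between
  the abstract endpoints. Additivity makes the sum of their primary costs at most the cost of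
  the path, and each is at least the corresponding optimum; so if the path cost equals the sum
  of the optima, every abstract image is a primary-optimal path. Its residual cost then bounds
  the optimal residual from above, while the abstraction condition bounds its primary plus
  residual cost by the cost of the path.\<close>

definition map_path :: "('s \<Rightarrow> 'a) \<Rightarrow> ('s \<times> 's) list \<Rightarrow> ('a \<times> 'a) list" where
  "map_path f p = map (map_prod f f) p"

lemma is_path_edges_subset: "is_path E u p v \<Longrightarrow> set p \<subseteq> E"
  by (induction p arbitrary: u) auto

lemma is_path_map_path:
  assumes "is_path E u p v" and "\<And>a b. (a, b) \<in> E \<Longrightarrow> (f a, f b) \<in> E'"
  shows "is_path E' (f u) (map_path f p) (f v)"
  using assms(1) by (induction p arbitrary: u) (auto simp: map_path_def assms(2))

lemma path_cost_map_path: "path_cost c (map_path f p) = path_cost (\<lambda>e. c (map_prod f f e)) p"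
  by (simp add: path_cost_def map_path_def comp_def)

lemma path_cost_add: "path_cost (\<lambda>e. a e + b e) p = path_cost a p + path_cost b p"
  by (simp add: path_cost_def sum_list_addf)

lemma path_cost_sum: "path_cost (\<lambda>e. \<Sum>i\<in>I. c i e) p = (\<Sum>i\<in>I. path_cost (c i) p)"
  by (induction p) (simp_all add: path_cost_def sum.distrib)

lemma path_cost_mono_on_path:
  assumes "is_path E u p v" and "\<And>e. e \<in> E \<Longrightarrow> a e \<le> b e"
  shows "path_cost a p \<le> path_cost b p"
  unfolding path_cost_def
  using is_path_edges_subset[OF assms(1)] assms(2) by (intro sum_list_mono) auto

lemma opt_cost_le_path_cost: "is_path E x p y \<Longrightarrow> opt_cost E c x y \<le> path_cost c p"
  unfolding opt_cost_def by (intro cInf_lower) auto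

lemma opt_residual_le_path_cost:
  "p \<in> opt_paths E c x y \<Longrightarrow> opt_residual E c r x y \<le> path_cost r p"
  unfolding opt_residual_def by (intro cInf_lower) auto

lemma abstraction_map_path:
  assumes "is_abstraction T Pi C Ta Pia Ca Ra psi" and "is_path Pi u p v"
  shows "is_path Pia (psi u) (map_path psi p) (psi v)"
    and "path_cost Ca (map_path psi p) + path_cost Ra (map_path psi p) \<le> path_cost C p"
proof -
  show "is_path Pia (psi u) (map_path psi p) (psi v)"
    using assms by (intro is_path_map_path) (auto simp: is_abstraction_def)
  have "path_cost (\<lambda>e. Ca (map_prod psi psi e) + Ra (map_prod psi psi e)) p
        \<le> path_cost C p"
    using assms by (intro path_cost_mono_on_path) (auto simp: is_abstraction_def)
  then show "path_cost Ca (map_path psi p) + path_cost Ra (map_path psi p) \<le> path_cost C p"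
    by (simp add: path_cost_add path_cost_map_path)
qed

lemma additive_map_path:
  assumes "additive Pi C k Ca psi" and "is_path Pi u p v"
  shows "(\<Sum>i = 1..k. path_cost (Ca i) (map_path (psi i) p)) \<le> path_cost C p"
proof -
  have "path_cost (\<lambda>e. \<Sum>i = 1..k. Ca i (map_prod (psi i) (psi i) e)) p \<le> path_cost C p"
    using assms by (intro path_cost_mono_on_path) (auto simp: additive_def)
  then show ?thesis
    by (simp add: path_cost_sum path_cost_map_path)
qed

theorem lemma9:
  fixes T :: "'s set" and Pi :: "('s \<times> 's) set" and C :: "'s \<times> 's \<Rightarrow> nat"
    and k :: nat
    and Ta :: "nat \<Rightarrow> 'a set" and Pia :: "nat \<Rightarrow> ('a \<times> 'a) set"
    and Ca Ra :: "nat \<Rightarrow> 'a \<times> 'a \<Rightarrow> nat" and psi :: "nat \<Rightarrow> 's \<Rightarrow> 'a"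
    and t g :: 's and p :: "('s \<times> 's) list" and j :: nat
  assumes "state_space T Pi"
    and "\<forall>i \<in> {1..k}. is_abstraction T Pi C (Ta i) (Pia i) (Ca i) (Ra i) (psi i)"
    and "additive Pi C k Ca psi"
    and "t \<in> T" and "g \<in> T"
    and "is_path Pi t p g"
    and "path_cost C p = (\<Sum>i = 1..k. opt_cost (Pia i) (Ca i) (psi i t) (psi i g))"
    and "j \<in> {1..k}"
  shows "(\<Sum>i = 1..k. opt_cost (Pia i) (Ca i) (psi i t) (psi i g))
           \<ge> opt_cost (Pia j) (Ca j) (psi j t) (psi j g)
             + opt_residual (Pia j) (Ca j) (Ra j) (psi j t) (psi j g)"
proof -
  define q where "q i = map_path (psi i) p" for i
  define opt where "opt i = opt_cost (Pia i) (Ca i) (psi i t) (psi i g)" for i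
  have path: "is_path (Pia i) (psi i t) (q i) (psi i g)" if "i \<in> {1..k}" for i
    using abstraction_map_path(1)[OF bspec[OF assms(2) that] assms(6)] unfolding q_def .
  have le: "opt i \<le> path_cost (Ca i) (q i)" if "i \<in> {1..k}" for i
    using opt_cost_le_path_cost[OF path[OF that]] unfolding opt_def .
  have "(\<Sum>i = 1..k. path_cost (Ca i) (q i)) \<le> (\<Sum>i = 1..k. opt i)"
    using additive_map_path[OF assms(3,6)] assms(7) unfolding q_def opt_def by simp
  moreover have "(\<Sum>i = 1..k. opt i) \<le> (\<Sum>i = 1..k. path_cost (Ca i) (q i))"
    using le by (rule sum_mono)
  ultimately have "(\<Sum>i = 1..k. opt i) = (\<Sum>i = 1..k. path_cost (Ca i) (q i))"
    by (rule antisym[rotated])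
  then have opt_j: "opt j = path_cost (Ca j) (q j)"
    by (rule sum_mono_inv[where I = "{1..k}"]) (use le assms(8) in auto)
  then have "q j \<in> opt_paths (Pia j) (Ca j) (psi j t) (psi j g)"
    using path[OF assms(8)] unfolding opt_paths_def opt_def by simp
  then have "opt_residual (Pia j) (Ca j) (Ra j) (psi j t) (psi j g) \<le> path_cost (Ra j) (q j)"
    by (rule opt_residual_le_path_cost)
  moreover have "path_cost (Ca j) (q j) + path_cost (Ra j) (q j) \<le> path_cost C p"
    using abstraction_map_path(2)[OF bspec[OF assms(2,8)] assms(6)] unfolding q_def .
  ultimately show ?thesis
    using opt_j assms(7) unfolding opt_def by linarith
qed

end
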